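(* Let $\pi\in\mathfrak{S}_n$ avoid $132$ and have all cycles of length $1$ or $3$. Let the $3$-cycles of $\pi$ have element sets $\{a_i<b_i<c_i\}$, $i=1,\dots,m$. Then every fixed point $g$ of $\pi$ satisfies $g>a_i$ for all $i$, and moreover $g$ lies at a hit of the Dyck word formed by the second and third entries, i.e. $|\{i: b_i<g\}|=|\{i: c_i<g\}|$.
   Context: A permutation avoids $132$ if there are no indices $i<j<k$ with $\pi_i<\pi_k<\pi_j$. (The Dyck word of the second and third entries is obtained by listing $\{b_i\}\cup\{c_i\}$ in increasing order, writing $0$ for each $b_i$ and $1$ for each $c_i$; a hit is a place where the preceding letters contain equally many $0$'s and $1$'s.) *)

theory Defs
  imports "HOL-Combinatorics.Permutations"
begin

definition avoids132 :: "(nat \<Rightarrow> nat) \<Rightarrow> nat \<Rightarrow> bool" where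
  "avoids132 \<pi> n \<longleftrightarrow>
     \<not> (\<exists>i j k. 1 \<le> i \<and> i < j \<and> j < k \<and> k \<le> n \<and> \<pi> i < \<pi> k \<and> \<pi> k < \<pi> j)"

definition cycle_len :: "(nat \<Rightarrow> nat) \<Rightarrow> nat \<Rightarrow> nat" where
  "cycle_len \<pi> x = (LEAST k. 0 < k \<and> (\<pi> ^^ k) x = x)"

definition three_cycles :: "(nat \<Rightarrow> nat) \<Rightarrow> nat \<Rightarrow> nat set set" where
  "three_cycles \<pi> n = {{x, \<pi> x, \<pi> (\<pi> x)} | x. x \<in> {1..n} \<and> cycle_len \<pi> x = 3}"

definition middle :: "nat set \<Rightarrow> nat" where
  "middle C = Min (C - {Min C})"

end

theory Submission
  imports Defs
begin

text \<open>Each 3-cycle \<open>a < b < c\<close> of \<open>\<pi>\<close> is traversed either as \<open>a \<mapsto> b \<mapsto> c \<mapsto> a\<close> or as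
  \<open>a \<mapsto> c \<mapsto> b \<mapsto> a\<close>. In both orientations a fixed point \<open>g\<close> with \<open>g < a\<close> or
  \<open>b < g < c\<close> forms a 132 pattern together with two entries of the cycle. So every
  3-cycle either lies below \<open>g\<close> or satisfies \<open>a < g < b\<close>; in either case \<open>b < g\<close> iff
  \<open>c < g\<close>, and the two sets of cycles being counted coincide.\<close>

definition cyclic3 :: "(nat \<Rightarrow> nat) \<Rightarrow> nat \<Rightarrow> nat \<Rightarrow> nat \<Rightarrow> bool" where
  "cyclic3 \<pi> x y z \<longleftrightarrow> \<pi> x = y \<and> \<pi> y = z \<and> \<pi> z = x"

lemma permutation_cycle_len_3:
  assumes "permutation \<pi>" "cycle_len \<pi> x = 3"
  shows "\<pi> x \<noteq> x" "\<pi> (\<pi> x) \<noteq> x" "cyclic3 \<pi> x (\<pi> x) (\<pi> (\<pi> x))"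
proof -
  let ?P = "\<lambda>k. 0 < k \<and> (\<pi> ^^ k) x = x"
  obtain k where "?P k" using assms(1) by (blast intro: permutation_self)
  then have "?P (LEAST k. ?P k)" by (rule LeastI)
  then have "?P 3" using assms(2) unfolding cycle_len_def by simp
  moreover have "\<not> ?P 1" "\<not> ?P 2"
    using not_less_Least[of 1 ?P] not_less_Least[of 2 ?P] assms(2)
    unfolding cycle_len_def by auto
  ultimately show "\<pi> x \<noteq> x" "\<pi> (\<pi> x) \<noteq> x" "cyclic3 \<pi> x (\<pi> x) (\<pi> (\<pi> x))"
    by (simp_all add: cyclic3_def numeral_eq_Suc)
qed

lemma cyclic3_sorted:
  fixes x y z :: nat
  assumes "cyclic3 \<pi> x y z" "x \<noteq> y" "y \<noteq> z" "x \<noteq> z"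
  obtains a b c where "a < b" "b < c" "{x, y, z} = {a, b, c}"
    "cyclic3 \<pi> a b c \<or> cyclic3 \<pi> a c b"
  using assms
  by (cases x y rule: linorder_cases; cases y z rule: linorder_cases;
      cases x z rule: linorder_cases) (auto simp: cyclic3_def insert_commute)

lemma three_cyclesE:
  assumes "\<pi> permutes {1..n}" "C \<in> three_cycles \<pi> n"
  obtains a b c where "1 \<le> a" "a < b" "b < c" "c \<le> n" "C = {a, b, c}"
    "cyclic3 \<pi> a b c \<or> cyclic3 \<pi> a c b"
proof -
  obtain x where x: "C = {x, \<pi> x, \<pi> (\<pi> x)}" "x \<in> {1..n}" "cycle_len \<pi> x = 3"
    using assms(2) unfolding three_cycles_def by auto
  have perm: "permutation \<pi>"
    using assms(1) permutation_permutes by blast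
  note cyc = permutation_cycle_len_3[OF perm x(3)]
  have "\<pi> x \<noteq> \<pi> (\<pi> x)"
    using cyc(1) permutes_inj[OF assms(1)] by (metis injD)
  then obtain a b c where abc: "a < b" "b < c" "C = {a, b, c}"
    "cyclic3 \<pi> a b c \<or> cyclic3 \<pi> a c b"
    using cyclic3_sorted[OF cyc(3)] cyc(1,2) x(1) by metis
  have "C \<subseteq> {1..n}"
    using x(1,2) permutes_in_image[OF assms(1)] by simp
  with abc show thesis
    by (intro that) auto
qed

lemma Min_middle_Max_3:
  fixes a b c :: nat
  assumes "a < b" "b < c"
  shows "Min {a, b, c} = a" "middle {a, b, c} = b" "Max {a, b, c} = c"
proof -
  show Min: "Min {a, b, c} = a"
    using assms by (simp add: min_def)
  have "{a, b, c} - {a} = {b, c}"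
    using assms by auto
  then show "middle {a, b, c} = b"
    unfolding middle_def Min using assms by (simp add: min_def)
  show "Max {a, b, c} = c"
    using assms by (simp add: max_def)
qed

lemma avoids132_fixed_point_vs_cyclic3:
  assumes "avoids132 \<pi> n" "\<pi> g = g" "1 \<le> g" "1 \<le> a" "a < b" "b < c" "c \<le> n"
    and "cyclic3 \<pi> a b c \<or> cyclic3 \<pi> a c b"
  shows "a < g" "\<not> (b < g \<and> g < c)"
proof -
  have no132: "\<not> (1 \<le> i \<and> i < j \<and> j < k \<and> k \<le> n \<and> \<pi> i < \<pi> k \<and> \<pi> k < \<pi> j)" for i j k
    using assms(1) unfolding avoids132_def by blast
  have "g \<noteq> a"
    using assms(2,5,6,8) unfolding cyclic3_def by auto
  then show "a < g"
    using assms(8) no132[of g b c] no132[of g a b] assms(2-7)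
    unfolding cyclic3_def by (cases "g < a") auto
  show "\<not> (b < g \<and> g < c)"
    using assms(8) no132[of a b g] no132[of b g c] assms(2-7)
    unfolding cyclic3_def by auto
qed

theorem lemma4p7:
  fixes \<pi> :: "nat \<Rightarrow> nat" and n :: nat
  assumes "\<pi> permutes {1..n}"
    and "avoids132 \<pi> n"
    and "\<forall>x\<in>{1..n}. cycle_len \<pi> x = 1 \<or> cycle_len \<pi> x = 3"
  shows "\<forall>g\<in>{1..n}. \<pi> g = g \<longrightarrow>
           (\<forall>C\<in>three_cycles \<pi> n. Min C < g) \<and>
           card {C\<in>three_cycles \<pi> n. middle C < g} = card {C\<in>three_cycles \<pi> n. Max C < g}"
proof (intro ballI impI)
  fix g assume g: "g \<in> {1..n}" "\<pi> g = g"
  have key: "Min C < g \<and> (middle C < g \<longleftrightarrow> Max C < g)" if C: "C \<in> three_cycles \<pi> n" for C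
  proof -
    obtain a b c where abc: "1 \<le> a" "a < b" "b < c" "c \<le> n" "C = {a, b, c}"
      "cyclic3 \<pi> a b c \<or> cyclic3 \<pi> a c b"
      using three_cyclesE[OF assms(1) C] .
    note outside = avoids132_fixed_point_vs_cyclic3[OF assms(2) g(2) _ abc(1-4,6)]
    have "g \<noteq> c"
      using abc(6) g(2) abc(2,3) unfolding cyclic3_def by auto
    then show ?thesis
      using outside g(1) Min_middle_Max_3[OF abc(2,3)] abc(5) by auto
  qed
  then have "{C\<in>three_cycles \<pi> n. middle C < g} = {C\<in>three_cycles \<pi> n. Max C < g}"
    by blast
  with key show "(\<forall>C\<in>three_cycles \<pi> n. Min C < g) \<and>
      card {C\<in>three_cycles \<pi> n. middle C < g} = card {C\<in>three_cycles \<pi> n. Max C < g}"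
    by simp
qed

end
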